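(* Let $p, \sigma \in \mathbb{R}$ and let $u \geq 0$ be a non-trivial function in $C^2(0,+\infty)$ solving $-u''(r) = r^\sigma u(r)^p$ for all $r \in (0,+\infty)$ (no continuity at $0$ assumed). Then: (1) $u$ is non-decreasing and $u'$ is non-increasing on $(0,+\infty)$; (2) there exist constants $c>0$, $C>0$ and $r_1>0$ such that $c \leq u(r) \leq C r$ for all $r \geq r_1$.
   Context: For $p=0$ the term $u^p$ is understood as $1$; for $p<0$ it is required that $u>0$ on $(0,+\infty)$. *)

theory Defs
  imports Complex_Main
begin

text \<open>Real power u^p with the paper's convention: for p = 0 the term is 1;
  otherwise it is the usual real power (u powr p), used for u \<ge> 0 when p > 0
  and for u > 0 when p < 0.\<close>
definition rpow :: "real \<Rightarrow> real \<Rightarrow> real" where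
  "rpow x p = (if p = 0 then 1 else x powr p)"

end

theory Submission
  imports Defs "HOL-Analysis.Derivative"
begin

text \<open>Since \<open>-u'' = r\<^sup>\<sigma> u\<^sup>p \<ge> 0\<close>, the function \<open>u\<close> is concave on \<open>(0,\<infinity>)\<close>, so it lies
  below each of its tangent lines. A negative slope \<open>u'(a) < 0\<close> would therefore force \<open>u\<close>
  below \<open>0\<close> far to the right of \<open>a\<close>; hence \<open>u' \<ge> 0\<close> and \<open>u\<close> is non-decreasing, while \<open>u'\<close>
  is non-increasing by concavity. The tangent line at \<open>1\<close> bounds \<open>u\<close> linearly from above,
  and any point where \<open>u > 0\<close> bounds it from below by monotonicity.\<close>

lemma mono_on_if_deriv_nonneg:
  fixes f :: "real \<Rightarrow> real"
  assumes "connected A"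
    and "\<And>x. x \<in> A \<Longrightarrow> (f has_real_derivative f' x) (at x)"
    and "\<And>x. x \<in> A \<Longrightarrow> f' x \<ge> 0"
  shows "mono_on A f"
proof (rule monotone_onI)
  fix x y assume "x \<in> A" "y \<in> A" "x \<le> y"
  have Icc: "{x..y} \<subseteq> A"
    using \<open>connected A\<close> \<open>x \<in> A\<close> \<open>y \<in> A\<close> by (rule connected_contains_Icc)
  show "f x \<le> f y"
  proof (rule DERIV_nonneg_imp_nondecreasing[OF \<open>x \<le> y\<close>])
    fix z assume "x \<le> z" "z \<le> y"
    with Icc have "z \<in> A" by auto
    with assms(2,3) show "\<exists>d. (f has_real_derivative d) (at z) \<and> d \<ge> 0" by blast
  qed
qed

lemma concave_on_below_tangent:
  fixes f :: "real \<Rightarrow> real"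
  assumes "concave_on A f" "connected A" "c \<in> interior A" "x \<in> A"
    and "(f has_real_derivative f') (at c)"
  shows "f x \<le> f c + f' * (x - c)"
proof -
  have "convex_on A (\<lambda>y. - f y)"
    using \<open>concave_on A f\<close> by (simp add: concave_on_def)
  moreover have "((\<lambda>y. - f y) has_real_derivative - f') (at c within A)"
    using DERIV_minus[OF assms(5)] by (rule has_field_derivative_at_within)
  ultimately have "- f' * (x - c) \<le> - f x - - f c"
    using convex_on_imp_above_tangent assms(2-4) by blast
  then show ?thesis by simp
qed

lemma concave_on_deriv_antimono:
  fixes f :: "real \<Rightarrow> real"
  assumes "concave_on A f" "open A" "connected A"
    and "\<And>x. x \<in> A \<Longrightarrow> (f has_real_derivative f' x) (at x)"
  shows "antimono_on A f'"
proof (rule monotone_onI)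
  fix x y assume x: "x \<in> A" and y: "y \<in> A" and "x \<le> y"
  have interior: "interior A = A"
    using \<open>open A\<close> by (rule interior_open)
  have "f y \<le> f x + f' x * (y - x)"
    using x y by (intro concave_on_below_tangent[OF assms(1,3) _ _ assms(4)]) (simp_all add: interior)
  moreover have "f x \<le> f y + f' y * (x - y)"
    using x y by (intro concave_on_below_tangent[OF assms(1,3) _ _ assms(4)]) (simp_all add: interior)
  ultimately have "0 \<le> (f' x - f' y) * (y - x)"
    by (simp add: algebra_simps)
  show "f' y \<le> f' x"
  proof (cases "x = y")
    case False
    with \<open>x \<le> y\<close> have "y - x > 0" by simp
    with \<open>0 \<le> (f' x - f' y) * (y - x)\<close> show ?thesis
      by (simp add: zero_le_mult_iff)
  qed simp
qed

lemma concave_on_deriv_nonneg_if_bounded_below: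
  fixes f :: "real \<Rightarrow> real"
  assumes concave: "concave_on {a<..} f"
    and deriv: "(f has_real_derivative f') (at x)" and "x > a"
    and bounded: "\<And>y. y > a \<Longrightarrow> m \<le> f y"
  shows "f' \<ge> 0"
proof (rule ccontr)
  assume "\<not> f' \<ge> 0"
  then have "f' < 0" by simp
  define y where "y = x + (f x - m) / - f' + 1"
  have "f x - m \<ge> 0"
    using bounded \<open>x > a\<close> by simp
  with \<open>f' < 0\<close> have "y > x"
    unfolding y_def by (simp add: divide_nonneg_pos)
  with \<open>x > a\<close> have "y > a" by simp
  have "f y \<le> f x + f' * (y - x)"
    using \<open>x > a\<close> \<open>y > a\<close>
    by (intro concave_on_below_tangent[OF concave connected_Ioi _ _ deriv]) (simp_all add: interior_open)
  also have "f' * (y - x) = m - f x + f'"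
    using \<open>f' < 0\<close> unfolding y_def by (simp add: field_simps)
  finally have "f y < m"
    using \<open>f' < 0\<close> by simp
  with bounded[OF \<open>y > a\<close>] show False by simp
qed

theorem lemma2p4:
  fixes u u' u'' :: "real \<Rightarrow> real" and p \<sigma> :: real
  assumes d1: "\<And>r. r > 0 \<Longrightarrow> (u has_real_derivative u' r) (at r)"
    and d2: "\<And>r. r > 0 \<Longrightarrow> (u' has_real_derivative u'' r) (at r)"
    and c2: "continuous_on {0<..} u''"
    and nonneg: "\<And>r. r > 0 \<Longrightarrow> u r \<ge> 0"
    and pos_if_neg: "p < 0 \<Longrightarrow> (\<And>r. r > 0 \<Longrightarrow> u r > 0)"
    and nontriv: "\<exists>r>0. u r \<noteq> 0"
    and eq: "\<And>r. r > 0 \<Longrightarrow> - u'' r = r powr \<sigma> * rpow (u r) p"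
  shows "mono_on {0<..} u \<and> monotone_on {0<..} (\<le>) (\<ge>) u'
         \<and> (\<exists>c>0. \<exists>C>0. \<exists>r1>0. \<forall>r\<ge>r1. c \<le> u r \<and> u r \<le> C * r)"
proof -
  have "u'' r \<le> 0" if "r > 0" for r
  proof -
    have "r powr \<sigma> * rpow (u r) p \<ge> 0"
      by (simp add: rpow_def)
    with eq[OF that] show ?thesis by linarith
  qed
  then have concave: "concave_on {0<..} u"
    using d1 d2 by (intro f''_le0_imp_concave) auto
  have u'_nonneg: "u' r \<ge> 0" if "r > 0" for r
    by (rule concave_on_deriv_nonneg_if_bounded_below[OF concave d1[OF that] that nonneg])
  have mono: "mono_on {0<..} u"
    using d1 u'_nonneg by (intro mono_on_if_deriv_nonneg) auto
  have "antimono_on {0<..} u'"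
    using concave d1 by (intro concave_on_deriv_antimono) auto
  moreover obtain r0 where "r0 > 0" "u r0 > 0"
    using nontriv nonneg by force
  moreover define C where "C = u 1 + u' 1 + 1"
  then have "C > 0"
    using nonneg[of 1] u'_nonneg[of 1] by simp
  moreover have "u r0 \<le> u r \<and> u r \<le> C * r" if "r \<ge> max r0 1" for r
  proof
    show "u r0 \<le> u r"
      using \<open>r0 > 0\<close> that by (intro monotone_onD[OF mono]) auto
    have "u r \<le> u 1 + u' 1 * (r - 1)"
      using that
      by (intro concave_on_below_tangent[OF concave connected_Ioi _ _ d1]) (simp_all add: interior_open)
    also have "\<dots> \<le> C * r"
      using nonneg[of 1] u'_nonneg[of 1] that mult_left_mono[of 1 r "u 1"]
      unfolding C_def by (simp add: algebra_simps)
    finally show "u r \<le> C * r" .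
  qed
  ultimately show ?thesis
    using mono by (intro conjI exI[of _ "u r0"] exI[of _ C] exI[of _ "max r0 1"]) auto
qed

end
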